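(* Let $\rho\ge1$ and let $b_\alpha\in C^\infty(\mathbb{T}^n)$, $\alpha\in\mathbb{N}^n$, $|\alpha|\ge2$, satisfy $$|\partial_\theta^\beta b_\alpha(\theta)|\le L_0L_1^{|\beta|}L_2^{|\alpha|-1}\Gamma(\rho|\beta|+1)\Gamma((\rho-1)|\alpha|+1)$$ for all $\theta\in\mathbb{T}^n$, all $\beta\in\mathbb{N}^n$ and all $|\alpha|\ge2$, where $L_0,L_1,L_2\ge1$. Then there are constants $c,c',c''>0$ depending only on $n$ and $\rho$ such that, with $\tilde L_0=cL_0L_1^{n+2}$, $L_1'=c'L_1$, $L_2'=c''L_2$, $$P_s(b_\alpha)\le\tilde L_0(L_1')^s(L_2')^{|\alpha|-1}\Gamma(\rho s+(\rho-1)(|\alpha|-2)+1)$$ for every $s\ge0$ and every $\alpha\in\mathbb{N}^n$ with $|\alpha|\ge2$.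
   Context: $\Gamma$ is Euler's Gamma function. For $u\in C(\mathbb{T}^n)$ with Fourier coefficients $u_k$, $S_s(u)=\sum_{k\in\mathbb{Z}^n}(1+|k|)^s|u_k|$, $|k|=\sum|k_j|$, and $P_s(u)=(s+1)^2S_s(u)$. (In the paper, $b_\alpha(\theta)=(\alpha!)^{-1}\partial_r^\alpha\widetilde H(\theta,0)$ are the Taylor coefficients of the nonlinear part of a Hamiltonian.) *)

theory Defs
  imports "HOL-Analysis.Analysis"
begin

text \<open>Functions on the torus T^n are represented as functions on real^'n that are
  2 pi-periodic in each coordinate. Multi-indices are functions 'n => nat.\<close>

definition periodic_torus :: "(real^'n \<Rightarrow> real) \<Rightarrow> bool" where
  "periodic_torus f \<longleftrightarrow> (\<forall>x i. f (x + (2*pi) *\<^sub>R axis i 1) = f x)"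

definition pdir :: "'n::finite \<Rightarrow> (real^'n \<Rightarrow> real) \<Rightarrow> real^'n \<Rightarrow> real" where
  "pdir i f x = deriv (\<lambda>t. f (x + t *\<^sub>R axis i 1)) 0"

fun ipd :: "'n::finite list \<Rightarrow> (real^'n \<Rightarrow> real) \<Rightarrow> real^'n \<Rightarrow> real" where
  "ipd [] f = f"
| "ipd (i # is) f = pdir i (ipd is f)"

definition smooth_fun :: "(real^'n::finite \<Rightarrow> real) \<Rightarrow> bool" where
  "smooth_fun f \<longleftrightarrow> (\<forall>ds. continuous_on UNIV (ipd ds f) \<and>
      (\<forall>i x. (\<lambda>t. ipd ds f (x + t *\<^sub>R axis i 1)) differentiable (at 0)))"

definition enum_idx :: "'n::finite list" where
  "enum_idx = (SOME xs. distinct xs \<and> set xs = UNIV)"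

definition pdiff :: "('n::finite \<Rightarrow> nat) \<Rightarrow> (real^'n \<Rightarrow> real) \<Rightarrow> real^'n \<Rightarrow> real" where
  "pdiff \<beta> f = ipd (concat (map (\<lambda>i. replicate (\<beta> i) i) enum_idx)) f"

definition mabs :: "('n::finite \<Rightarrow> nat) \<Rightarrow> nat" where
  "mabs \<alpha> = (\<Sum>i\<in>UNIV. \<alpha> i)"

definition kabs :: "('n::finite \<Rightarrow> int) \<Rightarrow> int" where
  "kabs k = (\<Sum>i\<in>UNIV. \<bar>k i\<bar>)"

definition fourier_coeff :: "(real^'n::finite \<Rightarrow> real) \<Rightarrow> ('n \<Rightarrow> int) \<Rightarrow> complex" where
  "fourier_coeff u k = complex_of_real (1 / (2*pi) ^ CARD('n)) *
     integral (cbox 0 (\<chi> i. 2*pi))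
       (\<lambda>\<theta>. complex_of_real (u \<theta>) * cis (- (\<Sum>j\<in>UNIV. of_int (k j) * \<theta> $ j)))"

definition S_norm :: "real \<Rightarrow> (real^'n::finite \<Rightarrow> real) \<Rightarrow> real" where
  "S_norm s u = (\<Sum>\<^sub>\<infinity>k\<in>UNIV. (1 + real_of_int (kabs k)) powr s * cmod (fourier_coeff u k))"

definition S_summable :: "real \<Rightarrow> (real^'n::finite \<Rightarrow> real) \<Rightarrow> bool" where
  "S_summable s u \<longleftrightarrow> (\<lambda>k. (1 + real_of_int (kabs k)) powr s * cmod (fourier_coeff u k)) summable_on UNIV"

definition P_norm :: "real \<Rightarrow> (real^'n::finite \<Rightarrow> real) \<Rightarrow> real" where
  "P_norm s u = (s + 1)^2 * S_norm s u"

end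

theory Submission
  imports Defs
begin

text \<open>Differentiating \<open>m\<close> times in a direction \<open>j\<close> with \<open>|k\<^sub>j|\<close> maximal multiplies the Fourier
  coefficient \<open>u\<^sub>k\<close> by \<open>(i k\<^sub>j)\<^sup>m\<close>, and \<open>|k| \<le> n |k\<^sub>j|\<close>; so a bound
  \<open>|\<partial>\<^sup>\<beta> u| \<le> A L\<^sub>1\<^sup>|\<^sup>\<beta>\<^sup>| \<Gamma>(\<rho>|\<beta>| + 1)\<close> gives \<open>(1 + |k|)\<^sup>m |u\<^sub>k| \<le> 2 A (2 n L\<^sub>1)\<^sup>m \<Gamma>(\<rho> m + 1)\<close>
  for every \<open>m\<close>. For \<open>m = \<lceil>s\<rceil> + n + 1\<close> this dominates \<open>(1 + |k|)\<^sup>s |u\<^sub>k|\<close> by a multiple of the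
  summable weight \<open>(1 + |k|)\<^sup>-\<^sup>n\<^sup>-\<^sup>1\<close>. Log-convexity of \<open>\<Gamma>\<close> gives \<open>\<Gamma>(x) \<Gamma>(y) \<le> \<Gamma>(x + y)\<close>,
  merging \<open>\<Gamma>((\<rho> - 1)|\<alpha>| + 1) \<Gamma>(\<rho> m + 1)\<close> into one value \<open>\<Gamma>(z + D)\<close>, where
  \<open>z = \<rho> s + (\<rho> - 1)(|\<alpha>| - 2) + 1\<close> and \<open>D\<close> depends only on \<open>n\<close> and \<open>\<rho>\<close>. Finally
  \<open>\<Gamma>(z + D) \<le> (z + D)\<^sup>D \<Gamma>(z) \<le> D\<^sup>D e\<^sup>z\<^sup>+\<^sup>D \<Gamma>(z)\<close>, and \<open>e\<^sup>z\<close> is absorbed into the geometric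
  factors \<open>c'\<^sup>s\<close> and \<open>c''\<^sup>|\<^sup>\<alpha>\<^sup>|\<^sup>-\<^sup>1\<close>.\<close>

lemma Gamma_plus1_real: "(x::real) > 0 \<Longrightarrow> Gamma (x + 1) = x * Gamma x"
  by (rule Gamma_plus1) (auto elim!: nonpos_Ints_cases)

lemma Gamma_mono_real:
  fixes x y :: real
  assumes "3/2 \<le> x" "x \<le> y"
  shows "Gamma x \<le> Gamma y"
  using Gamma_real_strict_mono[of x y] assms by (cases "x = y") auto

lemma Gamma_mult_le_Gamma_add:
  fixes x y :: real
  assumes x: "x \<ge> 1" and y: "y \<ge> 1"
  shows "Gamma x * Gamma y \<le> Gamma (x + y)"
proof -
  define S where "S = x + y - 1"
  define f where "f = (ln \<circ> Gamma :: real \<Rightarrow> real)"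
  have convex: "convex_on {0<..} f" unfolding f_def by (rule log_convex_Gamma_real)
  have f1: "f 1 = 0" by (simp add: f_def)
  have S: "S \<ge> 1" using x y by (simp add: S_def)
  have "f x + f y \<le> f S"
  proof (cases "S = 1")
    case True
    then have "x = 1" "y = 1" using x y S_def by auto
    then show ?thesis using True f1 by simp
  next
    case False
    define t where "t = (x - 1) / (S - 1)"
    have t: "0 \<le> t" "t \<le> 1" using x y False S by (auto simp: t_def S_def field_simps)
    have "t * (S - 1) = x - 1" using False by (simp add: t_def)
    then have x_conv: "x = (1 - t) *\<^sub>R 1 + t *\<^sub>R S"
      and y_conv: "y = (1 - (1 - t)) *\<^sub>R 1 + (1 - t) *\<^sub>R S"
      by (simp_all add: S_def algebra_simps)
    have "f x \<le> (1 - t) * f 1 + t * f S"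
      unfolding x_conv by (rule convex_onD[OF convex]) (use t S in auto)
    moreover have "f y \<le> (1 - (1 - t)) * f 1 + (1 - t) * f S"
      unfolding y_conv by (rule convex_onD[OF convex]) (use t S in auto)
    ultimately show ?thesis using f1 by (simp add: algebra_simps)
  qed
  then have "exp (f x + f y) \<le> exp (f S)" by simp
  then have "Gamma x * Gamma y \<le> Gamma S"
    using x y S by (simp add: f_def exp_add)
  also have "\<dots> \<le> S * Gamma S" using S Gamma_real_pos[of S] by simp
  also have "\<dots> = Gamma (x + y)" using Gamma_plus1_real[of S] S by (simp add: S_def)
  finally show ?thesis .
qed

lemma Gamma_add_nat_le:
  fixes x :: real
  assumes "x > 0"
  shows "Gamma (x + real D) \<le> (x + real D) ^ D * Gamma x"
proof (induction D)
  case (Suc D)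
  have "Gamma (x + real (Suc D)) = (x + real D) * Gamma (x + real D)"
    using Gamma_plus1_real[of "x + real D"] assms by (simp add: add_ac)
  also have "\<dots> \<le> (x + real (Suc D)) * ((x + real (Suc D)) ^ D * Gamma x)"
    using Suc assms Gamma_real_pos[of x]
    by (intro mult_mono order.trans[OF Suc] mult_right_mono power_mono) auto
  finally show ?case by simp
qed simp

lemma power_le_power_mult_exp:
  fixes y :: real
  assumes "y \<ge> 0"
  shows "y ^ D \<le> real D ^ D * exp y"
proof (cases "D = 0")
  case False
  have "y / real D \<le> exp (y / real D)" using exp_ge_add_one_self[of "y / real D"] by linarith
  then have "(y / real D) ^ D \<le> exp (y / real D) ^ D" using assms by (intro power_mono) auto
  also have "\<dots> = exp y" using False by (simp flip: exp_of_nat_mult)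
  finally show ?thesis using False by (simp add: power_divide field_simps)
qed (use assms in simp)

lemma square_plus_one_le_exp:
  fixes s :: real
  assumes "s \<ge> -1"
  shows "(s + 1)^2 \<le> 4 * exp s"
proof -
  have "s + 1 \<le> 2 * exp (s/2)" using exp_ge_add_one_self[of "s/2"] by linarith
  then have "(s + 1)^2 \<le> (2 * exp (s/2))^2" using assms by (intro power_mono) auto
  also have "\<dots> = 4 * exp s" by (simp add: power2_eq_square flip: exp_add)
  finally show ?thesis .
qed

lemma power_le_power_mult_powr:
  fixes b s :: real
  assumes "b \<ge> 1" "real m \<le> s + real M"
  shows "b ^ m \<le> b ^ M * b powr s"
proof -
  have "b ^ m = b powr real m" using assms by (simp add: powr_realpow)
  also have "\<dots> \<le> b powr (s + real M)" using assms by (intro powr_mono) auto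
  also have "\<dots> = b ^ M * b powr s" using assms by (simp add: powr_add powr_realpow)
  finally show ?thesis .
qed

lemma one_plus_power_le:
  fixes X :: real
  assumes "X \<ge> 0"
  shows "(1 + X) ^ m \<le> 2 ^ m * (1 + X ^ m)"
proof (cases "X \<le> 1")
  case True
  then have "(1 + X) ^ m \<le> 2 ^ m" using assms by (intro power_mono) auto
  also have "\<dots> \<le> 2 ^ m * (1 + X ^ m)" using assms by simp
  finally show ?thesis .
next
  case False
  then have "(1 + X) ^ m \<le> (2 * X) ^ m" using assms by (intro power_mono) auto
  also have "\<dots> \<le> 2 ^ m * (1 + X ^ m)" by (simp add: power_mult_distrib)
  finally show ?thesis .
qed

lemma Gamma_mult_Gamma_le_shift:
  fixes \<rho> s :: real and a m M :: nat
  assumes \<rho>: "\<rho> \<ge> 1" and s: "s \<ge> 0" and a: "a \<ge> 2" and m: "real m \<le> s + real M"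
  defines "D \<equiv> nat \<lceil>\<rho> * (real M + 2)\<rceil>"
  shows "Gamma ((\<rho> - 1) * real a + 1) * Gamma (\<rho> * real m + 1) \<le>
    real D ^ D * exp (real D + 1) * exp (\<rho> * s) * exp \<rho> ^ a *
    Gamma (\<rho> * s + (\<rho> - 1) * (real a - 2) + 1)"
proof -
  define z where "z = \<rho> * s + (\<rho> - 1) * (real a - 2) + 1"
  have z: "z \<ge> 1" using \<rho> s a by (simp add: z_def)
  have D: "real D \<ge> \<rho> * (real M + 2)" unfolding D_def by linarith
  have "Gamma ((\<rho> - 1) * real a + 1) * Gamma (\<rho> * real m + 1) \<le>
      Gamma ((\<rho> - 1) * real a + 1 + (\<rho> * real m + 1))"
    by (rule Gamma_mult_le_Gamma_add) (use \<rho> in auto)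
  also have "\<dots> \<le> Gamma (z + real D)"
  proof (rule Gamma_mono_real)
    have "\<rho> * real m \<le> \<rho> * (s + real M)" using m \<rho> by (intro mult_left_mono) auto
    then show "(\<rho> - 1) * real a + 1 + (\<rho> * real m + 1) \<le> z + real D"
      using D \<rho> by (simp add: z_def algebra_simps)
  qed (use \<rho> in simp)
  also have "\<dots> \<le> (z + real D) ^ D * Gamma z" using z by (intro Gamma_add_nat_le) auto
  also have "\<dots> \<le> real D ^ D * exp (z + real D) * Gamma z"
    using z by (intro mult_right_mono power_le_power_mult_exp) auto
  also have "exp (z + real D) \<le> exp (real D + 1) * exp (\<rho> * s) * exp \<rho> ^ a"
  proof -
    have "z + real D \<le> real D + 1 + \<rho> * s + real a * \<rho>" using \<rho> a by (simp add: z_def algebra_simps)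
    then show ?thesis by (simp flip: exp_add exp_of_nat_mult)
  qed
  then have "real D ^ D * exp (z + real D) * Gamma z \<le>
      real D ^ D * (exp (real D + 1) * exp (\<rho> * s) * exp \<rho> ^ a) * Gamma z"
    using z by (intro mult_right_mono mult_left_mono) auto
  finally show ?thesis by (simp add: z_def mult_ac)
qed

lemma weighted_Gamma_product_le:
  fixes \<rho> s b :: real and a m M :: nat
  assumes \<rho>: "\<rho> \<ge> 1" and s: "s \<ge> 0" and a: "a \<ge> 2" and b: "b \<ge> 1" and m: "real m \<le> s + real M"
  defines "D \<equiv> nat \<lceil>\<rho> * (real M + 2)\<rceil>"
  shows "(s + 1)^2 * b ^ m * (Gamma ((\<rho> - 1) * real a + 1) * Gamma (\<rho> * real m + 1)) \<le>
    4 * real D ^ D * exp (real D + 1) * exp \<rho> * b ^ M * (exp (1 + \<rho>) * b) powr s *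
    exp \<rho> ^ (a - 1) * Gamma (\<rho> * s + (\<rho> - 1) * (real a - 2) + 1)"
proof -
  define Gz where "Gz = Gamma (\<rho> * s + (\<rho> - 1) * (real a - 2) + 1)"
  define G where "G = Gamma ((\<rho> - 1) * real a + 1) * Gamma (\<rho> * real m + 1)"
  have "G \<ge> 0"
    unfolding G_def using \<rho> by (intro mult_nonneg_nonneg less_imp_le Gamma_real_pos) (auto simp: add_nonneg_pos)
  have weight: "(s + 1)^2 * b ^ m \<le> (4 * exp s) * (b ^ M * b powr s)"
    using square_plus_one_le_exp[of s] power_le_power_mult_powr[OF b m] s b by (intro mult_mono) auto
  have Gamma_product: "G \<le> real D ^ D * exp (real D + 1) * exp (\<rho> * s) * exp \<rho> ^ a * Gz"
    unfolding G_def Gz_def D_def by (rule Gamma_mult_Gamma_le_shift[OF \<rho> s a m])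
  have "(s + 1)^2 * b ^ m * G \<le>
      (4 * exp s) * (b ^ M * b powr s) * (real D ^ D * exp (real D + 1) * exp (\<rho> * s) * exp \<rho> ^ a * Gz)"
    by (rule mult_mono[OF weight Gamma_product]) (use \<open>G \<ge> 0\<close> b in auto)
  also have "\<dots> = 4 * real D ^ D * exp (real D + 1) * exp \<rho> * b ^ M * (exp (1 + \<rho>) * b) powr s *
      exp \<rho> ^ (a - 1) * Gz"
  proof -
    have "exp \<rho> ^ a = exp \<rho> * exp \<rho> ^ (a - 1)" using a by (simp flip: power_Suc)
    moreover have "exp (1 + \<rho>) powr s = exp s * exp (\<rho> * s)"
      by (simp add: powr_def algebra_simps flip: exp_add)
    ultimately show ?thesis using b by (simp add: powr_mult mult_ac)
  qed
  finally show ?thesis unfolding G_def Gz_def .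
qed

lemma integral_cbox_split_component:
  fixes f :: "real^'n \<Rightarrow> 'b::banach"
  assumes "f integrable_on cbox a b"
  shows "integral (cbox a b) f =
    integral (cbox a b \<inter> {x. x$k \<le> c}) f + integral (cbox a b \<inter> {x. x$k \<ge> c}) f"
proof -
  have k: "axis k (1::real) \<in> Basis" by simp
  have "\<And>x::real^'n. x \<bullet> axis k 1 = x$k" by (simp add: inner_axis)
  then have "(f has_integral (integral (cbox a b \<inter> {x. x$k \<le> c}) f + integral (cbox a b \<inter> {x. x$k \<ge> c}) f))
      (cbox a b)"
    using has_integral_split[OF _ _ k, of f _ a b c] integrable_split[OF assms k, of c]
    by (auto intro: integrable_integral)
  then show ?thesis by (rule integral_unique)
qed

text \<open>Translating the box by \<open>t\<close> in direction \<open>j\<close>, the part beyond \<open>x\<^sub>j = 2\<pi>\<close> is moved back by one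
  period and fills the gap \<open>0 \<le> x\<^sub>j \<le> t\<close>.\<close>

lemma integral_torus_translate_nonneg:
  fixes g :: "real^'n \<Rightarrow> 'b::banach"
  assumes cont: "continuous_on UNIV g" and periodic: "\<And>x. g (x + (2*pi) *\<^sub>R axis j 1) = g x"
    and t: "0 \<le> t" "t \<le> 2*pi"
  shows "integral (cbox 0 (\<chi> i. 2*pi)) (\<lambda>x. g (x + t *\<^sub>R axis j 1)) = integral (cbox 0 (\<chi> i. 2*pi)) g"
proof -
  define E where "E = (axis j 1 :: real^'n)"
  define P where "P = (\<chi> i. 2*pi :: real^'n)"
  have int: "g integrable_on cbox a b" for a b
    by (rule integrable_continuous) (rule continuous_on_subset[OF cont], simp)
  have shift: "integral (cbox 0 P) (\<lambda>x. g (x + t *\<^sub>R E)) = integral (cbox (t *\<^sub>R E) (P + t *\<^sub>R E)) g"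
    using integral_shift_cbox[of "t *\<^sub>R E" "t *\<^sub>R E" "P + t *\<^sub>R E" g] by simp
  have low: "cbox (t *\<^sub>R E) (P + t *\<^sub>R E) \<inter> {x. x$j \<le> 2*pi} = cbox 0 P \<inter> {x. x$j \<ge> t}"
    by (rule set_eqI) (simp add: mem_box_cart axis_def E_def P_def; use t in \<open>smt (verit)\<close>)
  have high: "cbox (t *\<^sub>R E) (P + t *\<^sub>R E) \<inter> {x. x$j \<ge> 2*pi} = cbox ((2*pi) *\<^sub>R E) (P + t *\<^sub>R E)"
    by (rule set_eqI) (simp add: mem_box_cart axis_def E_def P_def; use t in \<open>smt (verit)\<close>)
  have wrap: "cbox 0 (P + (t - 2*pi) *\<^sub>R E) = cbox 0 P \<inter> {x. x$j \<le> t}"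
    by (rule set_eqI) (simp add: mem_box_cart axis_def E_def P_def; use t in \<open>smt (verit)\<close>)
  have "integral (cbox ((2*pi) *\<^sub>R E) (P + t *\<^sub>R E)) g = integral (cbox 0 (P + (t - 2*pi) *\<^sub>R E)) g"
    using integral_shift_cbox[of "(2*pi) *\<^sub>R E" "(2*pi) *\<^sub>R E" "P + t *\<^sub>R E" g] periodic
    by (simp add: E_def algebra_simps)
  then show ?thesis
    using shift low high wrap
      integral_cbox_split_component[OF int, of "t *\<^sub>R E" "P + t *\<^sub>R E" j "2*pi"]
      integral_cbox_split_component[OF int, of 0 P j t]
    unfolding E_def P_def by (simp add: add.commute)
qed

lemma integral_torus_translate:
  fixes g :: "real^'n \<Rightarrow> 'b::banach"
  assumes cont: "continuous_on UNIV g" and periodic: "\<And>x. g (x + (2*pi) *\<^sub>R axis j 1) = g x"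
    and t: "\<bar>t\<bar> \<le> 2*pi"
  shows "integral (cbox 0 (\<chi> i. 2*pi)) (\<lambda>x. g (x + t *\<^sub>R axis j 1)) = integral (cbox 0 (\<chi> i. 2*pi)) g"
proof (cases "t \<ge> 0")
  case False
  have "g (x + t *\<^sub>R axis j 1) = g (x + (t + 2*pi) *\<^sub>R axis j 1)" for x
    using periodic[of "x + t *\<^sub>R axis j 1"] by (simp add: algebra_simps)
  then show ?thesis
    using integral_torus_translate_nonneg[OF cont periodic, of "t + 2*pi"] t False by simp
qed (use integral_torus_translate_nonneg[OF assms(1,2)] t in auto)

lemma ipd_append: "ipd ds (ipd es f) = ipd (ds @ es) f"
  by (induction ds) auto

lemma smooth_fun_continuous: "smooth_fun f \<Longrightarrow> continuous_on UNIV f"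
  unfolding smooth_fun_def by (metis ipd.simps(1))

lemma smooth_fun_pdir: "smooth_fun f \<Longrightarrow> smooth_fun (pdir j f)"
  unfolding smooth_fun_def using ipd_append[of _ "[j]" f] by simp

lemma periodic_torus_pdir:
  fixes f :: "real^'n::finite \<Rightarrow> real"
  assumes "periodic_torus f"
  shows "periodic_torus (pdir j f)"
  unfolding periodic_torus_def pdir_def
proof (intro allI)
  fix x :: "real^'n" and i :: 'n
  have "f (x + (2 * pi) *\<^sub>R axis i 1 + t *\<^sub>R axis j 1) = f (x + t *\<^sub>R axis j 1)" for t
    using assms unfolding periodic_torus_def by (metis add.assoc add.commute)
  then show "deriv (\<lambda>t. f (x + (2 * pi) *\<^sub>R axis i 1 + t *\<^sub>R axis j 1)) 0 = deriv (\<lambda>t. f (x + t *\<^sub>R axis j 1)) 0"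
    by simp
qed

lemma smooth_fun_ipd_replicate: "smooth_fun u \<Longrightarrow> smooth_fun (ipd (replicate m j) u)"
  by (induction m) (auto intro: smooth_fun_pdir)

lemma periodic_torus_ipd_replicate: "periodic_torus u \<Longrightarrow> periodic_torus (ipd (replicate m j) u)"
  by (induction m) (auto intro: periodic_torus_pdir)

lemma smooth_fun_has_real_derivative_line:
  assumes "smooth_fun f"
  shows "((\<lambda>t. f (x + t *\<^sub>R axis i 1)) has_real_derivative pdir i f (x + t0 *\<^sub>R axis i 1)) (at t0)"
proof -
  define y where "y = x + t0 *\<^sub>R axis i 1"
  have "(\<lambda>s. f (y + s *\<^sub>R axis i 1)) differentiable at 0"
    using assms unfolding smooth_fun_def by (metis ipd.simps(1))
  then have "((\<lambda>s. f (y + s *\<^sub>R axis i 1)) has_real_derivative pdir i f y) (at 0)"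
    unfolding pdir_def by (simp add: DERIV_deriv_iff_real_differentiable)
  moreover have "(\<lambda>s. f (y + s *\<^sub>R axis i 1)) = (\<lambda>s. (\<lambda>t. f (x + t *\<^sub>R axis i 1)) (s + t0))"
    by (simp add: y_def algebra_simps)
  ultimately have "((\<lambda>t. f (x + t *\<^sub>R axis i 1)) has_real_derivative pdir i f y) (at (0 + t0))"
    by (subst DERIV_shift) simp
  then show ?thesis by (simp add: y_def)
qed

definition fourier_char :: "('n::finite \<Rightarrow> int) \<Rightarrow> real^'n \<Rightarrow> complex" where
  "fourier_char k \<theta> = cis (- (\<Sum>j\<in>UNIV. of_int (k j) * \<theta> $ j))"

lemma fourier_coeff_eq:
  "fourier_coeff u k = complex_of_real (1 / (2*pi) ^ CARD('n)) *
     integral (cbox 0 (\<chi> i. 2*pi)) (\<lambda>\<theta>. complex_of_real (u \<theta>) * fourier_char k \<theta>)"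
  for u :: "real^'n::finite \<Rightarrow> real"
  by (simp add: fourier_coeff_def fourier_char_def)

lemma continuous_on_fourier_char: "continuous_on UNIV (fourier_char k)"
  unfolding fourier_char_def by (intro continuous_intros)

lemma fourier_char_translate:
  "fourier_char k (\<theta> + t *\<^sub>R axis j 1) = fourier_char k \<theta> * cis (- (of_int (k j) * t))"
proof -
  have "(\<Sum>l\<in>UNIV. of_int (k l) * (\<theta> + t *\<^sub>R axis j 1) $ l) =
      (\<Sum>l\<in>UNIV. of_int (k l) * \<theta> $ l) + (\<Sum>l\<in>UNIV. of_int (k l) * (t * (if l = j then 1 else 0)))"
    by (simp add: algebra_simps sum.distrib axis_def)
  also have "(\<Sum>l\<in>UNIV. of_int (k l) * (t * (if l = j then 1 else 0))) = of_int (k j) * t"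
    by (simp add: if_distrib cong: if_cong)
  finally show ?thesis by (simp add: fourier_char_def cis_mult algebra_simps)
qed

lemma fourier_char_periodic: "fourier_char k (\<theta> + (2*pi) *\<^sub>R axis j 1) = fourier_char k \<theta>"
proof -
  have "cis (- (of_int (k j) * (2*pi))) = cis (2 * pi * of_int (- k j))" by (simp add: algebra_simps)
  also have "\<dots> = 1" by (rule cis_multiple_2pi) simp
  finally show ?thesis by (simp add: fourier_char_translate)
qed

lemma integral_translate_times_fourier_char:
  fixes u :: "real^'n::finite \<Rightarrow> real"
  assumes "smooth_fun u" "periodic_torus u" "\<bar>t\<bar> \<le> 2*pi"
  shows "integral (cbox 0 (\<chi> i. 2*pi)) (\<lambda>\<theta>. complex_of_real (u (\<theta> + t *\<^sub>R axis j 1)) * fourier_char k \<theta>) =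
    cis (of_int (k j) * t) * integral (cbox 0 (\<chi> i. 2*pi)) (\<lambda>\<theta>. complex_of_real (u \<theta>) * fourier_char k \<theta>)"
proof -
  define g where "g = (\<lambda>\<theta>. complex_of_real (u \<theta>) * fourier_char k \<theta>)"
  have "continuous_on UNIV g" unfolding g_def
    using smooth_fun_continuous[OF assms(1)] continuous_on_fourier_char[of k]
    by (intro continuous_intros) auto
  moreover have "g (x + (2*pi) *\<^sub>R axis j 1) = g x" for x
    using assms(2) fourier_char_periodic[of k x j] by (simp add: g_def periodic_torus_def)
  ultimately have "integral (cbox 0 (\<chi> i. 2*pi)) (\<lambda>\<theta>. g (\<theta> + t *\<^sub>R axis j 1)) = integral (cbox 0 (\<chi> i. 2*pi)) g"
    using assms(3) by (rule integral_torus_translate)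
  moreover have "(\<lambda>\<theta>. complex_of_real (u (\<theta> + t *\<^sub>R axis j 1)) * fourier_char k \<theta>) =
      (\<lambda>\<theta>. cis (of_int (k j) * t) * g (\<theta> + t *\<^sub>R axis j 1))"
    by (simp add: g_def fourier_char_translate mult.left_commute[of "cis _"] cis_mult)
  ultimately show ?thesis by (simp add: g_def)
qed

lemma has_vector_derivative_integral_translate:
  fixes u :: "real^'n::finite \<Rightarrow> real"
  assumes smooth: "smooth_fun u"
  shows "((\<lambda>t. integral (cbox 0 (\<chi> i. 2*pi)) (\<lambda>\<theta>. complex_of_real (u (\<theta> + t *\<^sub>R axis j 1)) * fourier_char k \<theta>))
    has_vector_derivative
      integral (cbox 0 (\<chi> i. 2*pi)) (\<lambda>\<theta>. complex_of_real (pdir j u \<theta>) * fourier_char k \<theta>)) (at 0)"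
proof -
  define E where "E = (axis j 1 :: real^'n)"
  have cont_u: "continuous_on UNIV u" by (rule smooth_fun_continuous[OF smooth])
  have cont_du: "continuous_on UNIV (pdir j u)" by (rule smooth_fun_continuous[OF smooth_fun_pdir[OF smooth]])
  have "((\<lambda>t. integral (cbox 0 (\<chi> i. 2*pi)) (\<lambda>\<theta>. complex_of_real (u (\<theta> + t *\<^sub>R E)) * fourier_char k \<theta>))
    has_vector_derivative
      integral (cbox 0 (\<chi> i. 2*pi)) (\<lambda>\<theta>. complex_of_real (pdir j u (\<theta> + 0 *\<^sub>R E)) * fourier_char k \<theta>)) (at 0)"
  proof (rule leibniz_rule_vector_derivative
      [where fx="\<lambda>t \<theta>. complex_of_real (pdir j u (\<theta> + t *\<^sub>R E)) * fourier_char k \<theta>"])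
    fix t :: real and \<theta> :: "real^'n"
    have "((\<lambda>t. u (\<theta> + t *\<^sub>R E)) has_real_derivative pdir j u (\<theta> + t *\<^sub>R E)) (at t)"
      unfolding E_def by (rule smooth_fun_has_real_derivative_line[OF smooth])
    then show "((\<lambda>t. complex_of_real (u (\<theta> + t *\<^sub>R E)) * fourier_char k \<theta>) has_vector_derivative
        complex_of_real (pdir j u (\<theta> + t *\<^sub>R E)) * fourier_char k \<theta>) (at t within UNIV)"
      by (intro has_vector_derivative_mult_left has_vector_derivative_of_real)
  next
    fix t :: real
    show "(\<lambda>\<theta>. complex_of_real (u (\<theta> + t *\<^sub>R E)) * fourier_char k \<theta>) integrable_on cbox 0 (\<chi> i. 2 * pi)"
      by (intro integrable_continuous continuous_intros continuous_on_compose2[OF cont_u]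
          continuous_on_fourier_char[THEN continuous_on_subset]) auto
  next
    have "continuous_on UNIV (\<lambda>p::real \<times> (real^'n). pdir j u (snd p + fst p *\<^sub>R E))"
      by (intro continuous_on_compose2[OF cont_du] continuous_intros) auto
    moreover have "continuous_on UNIV (\<lambda>p::real \<times> (real^'n). fourier_char k (snd p))"
      by (intro continuous_on_compose2[OF continuous_on_fourier_char] continuous_intros) auto
    ultimately have "continuous_on UNIV
        (\<lambda>p::real \<times> (real^'n). complex_of_real (pdir j u (snd p + fst p *\<^sub>R E)) * fourier_char k (snd p))"
      by (intro continuous_intros)
    then show "continuous_on (UNIV \<times> cbox 0 (\<chi> i. 2 * pi))
        (\<lambda>(t, \<theta>). complex_of_real (pdir j u (\<theta> + t *\<^sub>R E)) * fourier_char k \<theta>)"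
      by (simp add: split_beta) (erule continuous_on_subset, simp)
  qed auto
  then show ?thesis by (simp add: E_def)
qed

text \<open>By translation invariance the translated integral is \<open>cis (k\<^sub>j t)\<close> times its value at \<open>t = 0\<close>;
  differentiating both sides at \<open>t = 0\<close> gives the formula.\<close>

lemma fourier_coeff_pdir:
  fixes u :: "real^'n::finite \<Rightarrow> real"
  assumes smooth: "smooth_fun u" and periodic: "periodic_torus u"
  shows "fourier_coeff (pdir j u) k = \<i> * of_int (k j) * fourier_coeff u k"
proof -
  define I where "I = integral (cbox 0 (\<chi> i. 2*pi)) (\<lambda>\<theta>. complex_of_real (u \<theta>) * fourier_char k \<theta>)"
  have "((\<lambda>z. exp (\<i> * of_int (k j) * z)) has_field_derivative \<i> * of_int (k j)) (at (of_real 0))"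
    by (auto intro!: derivative_eq_intros)
  then have "((\<lambda>t::real. exp (\<i> * of_int (k j) * of_real t)) has_vector_derivative \<i> * of_int (k j)) (at 0)"
    using has_vector_derivative_real_field by force
  then have "((\<lambda>t::real. cis (of_int (k j) * t)) has_vector_derivative \<i> * of_int (k j)) (at 0)"
    by (simp add: cis_conv_exp algebra_simps)
  then have "((\<lambda>t. cis (of_int (k j) * t) * I) has_vector_derivative \<i> * of_int (k j) * I) (at 0)"
    by (rule has_vector_derivative_mult_left)
  then have "((\<lambda>t. integral (cbox 0 (\<chi> i. 2*pi)) (\<lambda>\<theta>. complex_of_real (u (\<theta> + t *\<^sub>R axis j 1)) * fourier_char k \<theta>))
      has_vector_derivative \<i> * of_int (k j) * I) (at 0)"
    by (rule has_vector_derivative_transform_within_open[of _ _ _ "{-2*pi<..<2*pi}"])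
      (auto simp: I_def integral_translate_times_fourier_char[OF smooth periodic])
  then have "integral (cbox 0 (\<chi> i. 2*pi)) (\<lambda>\<theta>. complex_of_real (pdir j u \<theta>) * fourier_char k \<theta>) =
      \<i> * of_int (k j) * I"
    using vector_derivative_unique_at has_vector_derivative_integral_translate[OF smooth] by blast
  then show ?thesis unfolding fourier_coeff_eq by (simp add: I_def)
qed

lemma fourier_coeff_ipd_replicate:
  fixes u :: "real^'n::finite \<Rightarrow> real"
  assumes "smooth_fun u" "periodic_torus u"
  shows "fourier_coeff (ipd (replicate m j) u) k = (\<i> * of_int (k j)) ^ m * fourier_coeff u k"
proof (induction m)
  case (Suc m)
  have "fourier_coeff (ipd (replicate (Suc m) j) u) k = fourier_coeff (pdir j (ipd (replicate m j) u)) k"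
    by simp
  also have "\<dots> = \<i> * of_int (k j) * fourier_coeff (ipd (replicate m j) u) k"
    using assms by (intro fourier_coeff_pdir smooth_fun_ipd_replicate periodic_torus_ipd_replicate)
  finally show ?case using Suc by simp
qed simp

lemma norm_fourier_coeff_le:
  fixes v :: "real^'n::finite \<Rightarrow> real"
  assumes cont: "continuous_on UNIV v" and bound: "\<And>\<theta>. \<bar>v \<theta>\<bar> \<le> M"
  shows "cmod (fourier_coeff v k) \<le> M"
proof -
  define B where "B = cbox (0::real^'n) (\<chi> i. 2*pi)"
  have "0 \<in> B" unfolding B_def by (simp add: mem_box_cart)
  then have "B \<noteq> {}" by auto
  then have content: "Henstock_Kurzweil_Integration.content B = (2*pi) ^ CARD('n)"
    unfolding B_def by (simp add: content_cbox_cart)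
  have "norm (integral B (\<lambda>\<theta>. complex_of_real (v \<theta>) * fourier_char k \<theta>)) \<le> M * Henstock_Kurzweil_Integration.content B"
    unfolding B_def
  proof (rule integrable_bound)
    show "0 \<le> M" using bound[of 0] by simp
    show "(\<lambda>\<theta>. complex_of_real (v \<theta>) * fourier_char k \<theta>) integrable_on cbox 0 (\<chi> i. 2 * pi)"
      by (intro integrable_continuous continuous_intros continuous_on_fourier_char[THEN continuous_on_subset]
          continuous_on_subset[OF cont]) auto
    show "norm (complex_of_real (v x) * fourier_char k x) \<le> M" for x
      using bound[of x] by (simp add: fourier_char_def norm_mult)
  qed
  then show ?thesis
    unfolding fourier_coeff_eq B_def[symmetric] norm_mult norm_of_real content
    by (simp add: divide_le_eq mult.commute)
qed

lemma enum_idx_distinct_UNIV: "distinct (enum_idx :: 'n::finite list) \<and> set (enum_idx :: 'n list) = UNIV"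
  unfolding enum_idx_def by (rule someI_ex) (use finite_distinct_list[of "UNIV :: 'n set"] in auto)

lemma pdiff_single_direction: "pdiff (\<lambda>i. if i = j then m else 0) f = ipd (replicate m j) f"
proof -
  have "distinct xs \<Longrightarrow> concat (map (\<lambda>i. replicate (if i = j then m else 0) i) xs) =
      (if j \<in> set xs then replicate m j else [])" for xs :: "'a list"
    by (induction xs) auto
  then show ?thesis unfolding pdiff_def using enum_idx_distinct_UNIV by (metis UNIV_I)
qed

lemma mabs_single_direction: "mabs (\<lambda>i::'n::finite. if i = j then m else 0) = m"
  unfolding mabs_def by simp

lemma fourier_coeff_component_decay:
  fixes u :: "real^'n::finite \<Rightarrow> real"
  assumes "smooth_fun u" "periodic_torus u" and deriv_bound: "\<And>\<beta> \<theta>. \<bar>pdiff \<beta> u \<theta>\<bar> \<le> B (mabs \<beta>)"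
  shows "\<bar>real_of_int (k j)\<bar> ^ m * cmod (fourier_coeff u k) \<le> B m"
proof -
  have "cmod (fourier_coeff (ipd (replicate m j) u) k) \<le> B m"
    using deriv_bound[of "\<lambda>i. if i = j then m else 0"] assms
    by (intro norm_fourier_coeff_le smooth_fun_continuous smooth_fun_ipd_replicate)
      (simp_all add: pdiff_single_direction mabs_single_direction)
  then show ?thesis
    using assms by (simp add: fourier_coeff_ipd_replicate norm_mult norm_power)
qed

lemma fourier_coeff_decay:
  fixes u :: "real^'n::finite \<Rightarrow> real"
  assumes "smooth_fun u" "periodic_torus u" and "\<And>\<beta> \<theta>. \<bar>pdiff \<beta> u \<theta>\<bar> \<le> B (mabs \<beta>)"
  shows "(1 + real_of_int (kabs k)) ^ m * cmod (fourier_coeff u k) \<le> (2 * real CARD('n)) ^ m * (B 0 + B m)"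
proof -
  define N where "N = real CARD('n)"
  define X where "X = real_of_int (kabs k)"
  define F where "F = cmod (fourier_coeff u k)"
  obtain j where j: "\<And>i. \<bar>k i\<bar> \<le> \<bar>k j\<bar>"
    using Max_in[of "range (\<lambda>i. \<bar>k i\<bar>)"] Max_ge[of "range (\<lambda>i. \<bar>k i\<bar>)"] by fastforce
  have "kabs k \<le> int CARD('n) * \<bar>k j\<bar>"
    unfolding kabs_def using sum_bounded_above[of UNIV "\<lambda>i. \<bar>k i\<bar>" "\<bar>k j\<bar>"] j by simp
  then have "real_of_int (kabs k) \<le> real_of_int (int CARD('n) * \<bar>k j\<bar>)" by (simp only: of_int_le_iff)
  then have "X \<le> N * \<bar>real_of_int (k j)\<bar>" unfolding X_def N_def by simp
  moreover have X: "X \<ge> 0" unfolding X_def kabs_def by (simp add: sum_nonneg)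
  ultimately have "X ^ m \<le> N ^ m * \<bar>real_of_int (k j)\<bar> ^ m"
    by (metis power_mono power_mult_distrib)
  have "N ^ m \<ge> 1" unfolding N_def by (simp add: Suc_le_eq)
  have "(1 + X) ^ m \<le> 2 ^ m * (1 + X ^ m)" by (rule one_plus_power_le[OF X])
  also have "\<dots> \<le> 2 ^ m * (N ^ m + N ^ m * \<bar>real_of_int (k j)\<bar> ^ m)"
    using \<open>X ^ m \<le> _\<close> \<open>N ^ m \<ge> 1\<close> by (intro mult_left_mono add_mono) auto
  also have "\<dots> = 2 ^ m * N ^ m * (1 + \<bar>real_of_int (k j)\<bar> ^ m)" by (simp add: algebra_simps)
  finally have "(1 + X) ^ m \<le> 2 ^ m * N ^ m * (1 + \<bar>real_of_int (k j)\<bar> ^ m)" .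
  then have "(1 + X) ^ m * F \<le> 2 ^ m * N ^ m * (1 + \<bar>real_of_int (k j)\<bar> ^ m) * F"
    by (rule mult_right_mono) (simp add: F_def)
  also have "\<dots> = (2 * N) ^ m * (F + \<bar>real_of_int (k j)\<bar> ^ m * F)"
    by (simp add: power_mult_distrib algebra_simps)
  also have "\<dots> \<le> (2 * N) ^ m * (B 0 + B m)"
    using fourier_coeff_component_decay[OF assms, of k j 0] fourier_coeff_component_decay[OF assms, of k j m]
    unfolding F_def by (intro mult_left_mono add_mono) (auto simp: N_def)
  finally show ?thesis by (simp add: X_def F_def N_def)
qed

lemma summable_on_one_plus_abs_int_powr:
  fixes p :: real
  assumes p: "p > 1"
  shows "(\<lambda>z::int. (1 + real_of_int \<bar>z\<bar>) powr (-p)) summable_on UNIV"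
proof -
  define f where "f = (\<lambda>z::int. (1 + real_of_int \<bar>z\<bar>) powr (-p))"
  define h where "h = (\<lambda>n::nat. (1 + real n) powr (-p))"
  have "summable (\<lambda>n::nat. real n powr (-p))" using p by (simp add: summable_real_powr_iff)
  then have "summable (\<lambda>n::nat. real (Suc n) powr (-p))" by (subst summable_Suc_iff)
  then have h: "h summable_on UNIV"
    by (intro norm_summable_imp_summable_on) (simp add: h_def add.commute)
  have h_Suc: "(h \<circ> Suc) summable_on UNIV"
    by (rule summable_on_comparison_test[OF h]) (use p in \<open>auto simp: h_def intro!: powr_mono2'\<close>)
  have "f \<circ> int = h" by (simp add: fun_eq_iff f_def h_def)
  then have "f summable_on range int"
    using summable_on_reindex[of int UNIV f] h by simp
  moreover have "f \<circ> (\<lambda>n. - int (Suc n)) = h \<circ> Suc"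
    by (simp add: fun_eq_iff f_def h_def)
  then have "f summable_on range (\<lambda>n. - int (Suc n))"
    using summable_on_reindex[of "\<lambda>n. - int (Suc n)" UNIV f] h_Suc by (simp add: inj_on_def)
  ultimately have "f summable_on (range int \<union> range (\<lambda>n. - int (Suc n)))"
    by (rule summable_on_Un_disjoint) auto
  moreover have "range int \<union> range (\<lambda>n. - int (Suc n)) = UNIV"
  proof -
    have "z \<in> range int \<union> range (\<lambda>n. - int (Suc n))" for z :: int
    proof (cases "z \<ge> 0")
      case False
      then have "z = - int (Suc (nat (- z - 1)))" by simp
      then show ?thesis by blast
    qed (metis UNIV_I UnI1 image_eqI nonneg_int_cases)
    then show ?thesis by auto
  qed
  ultimately show ?thesis by (simp add: f_def)
qed

lemma summable_on_prod_UNIV: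
  fixes h :: "'a::countable \<Rightarrow> real"
  assumes "h summable_on UNIV" "\<And>z. h z \<ge> 0"
  shows "(\<lambda>g::'n::finite \<Rightarrow> 'a. \<Prod>x\<in>UNIV. h (g x)) summable_on UNIV"
proof -
  have "(\<lambda>z. norm (h z)) summable_on UNIV" using assms by simp
  then have "Infinite_Set_Sum.abs_summable_on h UNIV" by (rule abs_summable_equivalent[THEN iffD1])
  then have "Infinite_Set_Sum.abs_summable_on (\<lambda>g. \<Prod>x\<in>UNIV. h (g x)) (PiE (UNIV::'n set) (\<lambda>_. UNIV))"
    by (intro abs_summable_on_prod_PiE) auto
  then have "Infinite_Set_Sum.abs_summable_on (\<lambda>g::'n \<Rightarrow> 'a. \<Prod>x\<in>UNIV. h (g x)) UNIV"
    by simp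
  then have "(\<lambda>g::'n \<Rightarrow> 'a. norm (\<Prod>x\<in>UNIV. h (g x))) summable_on UNIV"
    by (rule abs_summable_equivalent[THEN iffD2])
  then show ?thesis using assms by (simp add: prod_nonneg abs_prod)
qed

definition lattice_weight :: "('n::finite \<Rightarrow> int) \<Rightarrow> real" where
  "lattice_weight k = (1 + real_of_int (kabs k)) powr (-(real CARD('n) + 1))"

text \<open>Dominated by the product of the one-dimensional weights \<open>(1 + |k\<^sub>j|)\<^sup>-\<^sup>p\<close>, \<open>p = (n + 1)/n\<close>.\<close>

lemma lattice_weight_summable: "(lattice_weight :: ('n::finite \<Rightarrow> int) \<Rightarrow> real) summable_on UNIV"
proof -
  define N where "N = real CARD('n)"
  have N: "N \<ge> 1" unfolding N_def by (simp add: Suc_le_eq)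
  define p where "p = (N + 1) / N"
  have p: "p > 1" using N by (simp add: p_def field_simps)
  define h where "h = (\<lambda>z::int. (1 + real_of_int \<bar>z\<bar>) powr (-p))"
  have prod: "(\<lambda>g::'n \<Rightarrow> int. \<Prod>x\<in>UNIV. h (g x)) summable_on UNIV"
    unfolding h_def by (intro summable_on_prod_UNIV summable_on_one_plus_abs_int_powr[OF p]) simp
  show ?thesis
  proof (rule summable_on_comparison_test[OF prod])
    fix k :: "'n \<Rightarrow> int"
    define R where "R = 1 + real_of_int (kabs k)"
    have R: "R \<ge> 1" by (simp add: R_def kabs_def sum_nonneg)
    have "real_of_int \<bar>k j\<bar> \<le> real_of_int (kabs k)" for j
      unfolding kabs_def of_int_le_iff by (rule member_le_sum) auto
    then have "(\<Prod>j\<in>UNIV. 1 + real_of_int \<bar>k j\<bar>) \<le> (\<Prod>j\<in>(UNIV::'n set). R)"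
      by (intro prod_mono) (simp add: R_def)
    moreover have "(\<Prod>j\<in>UNIV. 1 + real_of_int \<bar>k j\<bar>) > 0" by (intro prod_pos) auto
    ultimately have "(R ^ CARD('n)) powr (-p) \<le> (\<Prod>j\<in>UNIV. 1 + real_of_int \<bar>k j\<bar>) powr (-p)"
      using p by (intro powr_mono2') auto
    also have "\<dots> = (\<Prod>j\<in>UNIV. h (k j))" by (simp add: prod_powr_distrib h_def)
    finally have "(R ^ CARD('n)) powr (-p) \<le> (\<Prod>j\<in>UNIV. h (k j))" .
    moreover have "(R ^ CARD('n)) powr (-p) = lattice_weight k"
    proof -
      have "R ^ CARD('n) = R powr N" using R by (simp add: N_def powr_realpow)
      then show ?thesis using N by (simp add: lattice_weight_def R_def N_def powr_powr p_def)
    qed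
    ultimately show "lattice_weight k \<le> (\<Prod>j\<in>UNIV. h (k j))" by simp
  qed (simp add: lattice_weight_def)
qed

lemma lattice_weight_infsum_ge_1: "(\<Sum>\<^sub>\<infinity>k::'n::finite \<Rightarrow> int. lattice_weight k) \<ge> 1"
proof -
  have "infsum lattice_weight {\<lambda>_::'n. 0::int} \<le> infsum lattice_weight (UNIV :: ('n \<Rightarrow> int) set)"
    by (rule infsum_mono_neutral) (auto simp: lattice_weight_summable lattice_weight_def)
  moreover have "infsum lattice_weight {\<lambda>_::'n. 0::int} = 1" by (simp add: lattice_weight_def kabs_def)
  ultimately show ?thesis by simp
qed

lemma S_norm_le_of_decay:
  fixes u :: "real^'n::finite \<Rightarrow> real"
  assumes m: "s + real CARD('n) + 1 \<le> real m"
    and decay: "\<And>k. (1 + real_of_int (kabs k)) ^ m * cmod (fourier_coeff u k) \<le> W"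
  shows "S_summable s u \<and> S_norm s u \<le> W * (\<Sum>\<^sub>\<infinity>k::'n \<Rightarrow> int. lattice_weight k)"
proof -
  define f where "f = (\<lambda>k. (1 + real_of_int (kabs k)) powr s * cmod (fourier_coeff u k))"
  have f_le: "f k \<le> W * lattice_weight k" for k
  proof -
    define X where "X = 1 + real_of_int (kabs k)"
    have X: "X \<ge> 1" by (simp add: X_def kabs_def sum_nonneg)
    have "f k = X powr (s - real m) * (X ^ m * cmod (fourier_coeff u k))"
      using X by (simp add: f_def X_def[symmetric] powr_diff powr_realpow)
    also have "\<dots> \<le> X powr (-(real CARD('n) + 1)) * W"
      using X m decay[of k] by (intro mult_mono powr_mono) (auto simp: X_def)
    finally show ?thesis by (simp add: lattice_weight_def X_def mult.commute)
  qed
  have summable: "(\<lambda>k. W * lattice_weight k) summable_on UNIV"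
    by (rule summable_on_cmult_right[OF lattice_weight_summable])
  have "f summable_on UNIV"
    by (rule summable_on_comparison_test[OF summable]) (use f_le in \<open>auto simp: f_def\<close>)
  moreover have "S_norm s u \<le> W * (\<Sum>\<^sub>\<infinity>k::'n \<Rightarrow> int. lattice_weight k)"
    using infsum_mono[OF \<open>f summable_on UNIV\<close> summable f_le]
    by (simp add: S_norm_def f_def infsum_cmult_right')
  ultimately show ?thesis by (simp add: S_summable_def f_def)
qed

lemma S_norm_le_of_Gevrey_bound:
  fixes u :: "real^'n::finite \<Rightarrow> real"
  assumes \<rho>: "\<rho> \<ge> 1" and L1: "L1 \<ge> 1" and A: "A \<ge> 0" and u: "smooth_fun u" "periodic_torus u"
    and deriv_bound: "\<And>\<beta> \<theta>. \<bar>pdiff \<beta> u \<theta>\<bar> \<le> A * L1 ^ mabs \<beta> * Gamma (\<rho> * real (mabs \<beta>) + 1)"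
    and m: "s + real CARD('n) + 1 \<le> real m"
  shows "S_summable s u \<and> S_norm s u \<le>
    2 * A * (2 * real CARD('n) * L1) ^ m * Gamma (\<rho> * real m + 1) * (\<Sum>\<^sub>\<infinity>k::'n \<Rightarrow> int. lattice_weight k)"
proof (rule S_norm_le_of_decay[OF m])
  define B where "B = (\<lambda>j. A * L1 ^ j * Gamma (\<rho> * real j + 1))"
  have "Gamma (\<rho> * real m + 1) \<ge> 1"
  proof (cases "m = 0")
    case False
    then have "Gamma (\<rho> * real m + 1) \<ge> Gamma 2"
      using \<rho> mult_mono[of 1 \<rho> 1 "real m"] by (intro Gamma_mono_real) auto
    then show ?thesis using Gamma_plus1_real[of 1] by simp
  qed simp
  then have "1 * 1 \<le> L1 ^ m * Gamma (\<rho> * real m + 1)" using L1 by (intro mult_mono one_le_power) auto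
  then have "B 0 \<le> B m" using mult_left_mono[OF _ A, of 1] by (simp add: B_def mult.assoc)
  fix k
  have "(1 + real_of_int (kabs k)) ^ m * cmod (fourier_coeff u k) \<le> (2 * real CARD('n)) ^ m * (B 0 + B m)"
    using u deriv_bound unfolding B_def by (rule fourier_coeff_decay)
  also have "\<dots> \<le> (2 * real CARD('n)) ^ m * (B m + B m)"
    using \<open>B 0 \<le> B m\<close> by (intro mult_left_mono) auto
  finally show "(1 + real_of_int (kabs k)) ^ m * cmod (fourier_coeff u k) \<le>
      2 * A * (2 * real CARD('n) * L1) ^ m * Gamma (\<rho> * real m + 1)"
    by (simp add: B_def power_mult_distrib mult_ac)
qed

lemma P_norm_bound:
  fixes u :: "real^'n::finite \<Rightarrow> real" and \<rho> s L0 L1 L2 :: real and a :: nat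
  assumes \<rho>: "\<rho> \<ge> 1" and s: "s \<ge> 0" and a: "a \<ge> 2" and L: "L0 \<ge> 1" "L1 \<ge> 1" "L2 \<ge> 1"
    and u: "smooth_fun u" "periodic_torus u"
    and deriv_bound: "\<And>\<beta> \<theta>. \<bar>pdiff \<beta> u \<theta>\<bar> \<le> L0 * L1 ^ mabs \<beta> * L2 ^ (a - 1) *
      Gamma (\<rho> * real (mabs \<beta>) + 1) * Gamma ((\<rho> - 1) * real a + 1)"
  defines "N \<equiv> CARD('n)" and "D \<equiv> nat \<lceil>\<rho> * (real CARD('n) + 4)\<rceil>"
    and "K \<equiv> \<Sum>\<^sub>\<infinity>k::'n \<Rightarrow> int. lattice_weight k"
  shows "S_summable s u \<and>
    P_norm s u \<le> (8 * K * (2 * real N) ^ (N + 2) * real D ^ D * exp (real D + 1) * exp \<rho> * L0 * L1 ^ (N + 2)) *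
      (exp (1 + \<rho>) * (2 * real N) * L1) powr s * (exp \<rho> * L2) ^ (a - 1) *
      Gamma (\<rho> * s + (\<rho> - 1) * (real a - 2) + 1)"
proof -
  define m where "m = nat \<lceil>s\<rceil> + N + 1"
  define b where "b = 2 * real N * L1"
  define A where "A = L0 * L2 ^ (a - 1) * Gamma ((\<rho> - 1) * real a + 1)"
  have "A \<ge> 0" unfolding A_def using L \<rho>
    by (intro mult_nonneg_nonneg less_imp_le Gamma_real_pos) (auto simp: add_nonneg_pos)
  moreover have "s + real CARD('n) + 1 \<le> real m" unfolding m_def N_def by linarith
  ultimately have S: "S_summable s u \<and> S_norm s u \<le> 2 * A * b ^ m * Gamma (\<rho> * real m + 1) * K"
    using deriv_bound unfolding K_def b_def N_def
    by (intro S_norm_le_of_Gevrey_bound[OF \<rho> L(2) _ u]) (auto simp: A_def mult_ac)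
  have "P_norm s u \<le> (s + 1)^2 * (2 * A * b ^ m * Gamma (\<rho> * real m + 1) * K)"
    unfolding P_norm_def using S by (intro mult_left_mono) auto
  also have "\<dots> = 2 * K * L0 * L2 ^ (a - 1) *
      ((s + 1)^2 * b ^ m * (Gamma ((\<rho> - 1) * real a + 1) * Gamma (\<rho> * real m + 1)))"
    by (simp add: A_def mult_ac)
  also have "\<dots> \<le> 2 * K * L0 * L2 ^ (a - 1) * (4 * real D ^ D * exp (real D + 1) * exp \<rho> *
      b ^ (N + 2) * (exp (1 + \<rho>) * b) powr s * exp \<rho> ^ (a - 1) * Gamma (\<rho> * s + (\<rho> - 1) * (real a - 2) + 1))"
  proof (rule mult_left_mono)
    have "real (N + 2) + 2 = real CARD('n) + 4" by (simp add: N_def)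
    then have "nat \<lceil>\<rho> * (real (N + 2) + 2)\<rceil> = D" by (simp only: D_def)
    moreover have "real m \<le> s + real (N + 2)" unfolding m_def using s by linarith
    moreover have "N \<ge> 1" unfolding N_def by (simp add: Suc_le_eq)
    then have "b \<ge> 1" unfolding b_def using L mult_mono[of 1 "2 * real N" 1 L1] by simp
    ultimately show "(s + 1)^2 * b ^ m * (Gamma ((\<rho> - 1) * real a + 1) * Gamma (\<rho> * real m + 1)) \<le>
        4 * real D ^ D * exp (real D + 1) * exp \<rho> * b ^ (N + 2) * (exp (1 + \<rho>) * b) powr s *
        exp \<rho> ^ (a - 1) * Gamma (\<rho> * s + (\<rho> - 1) * (real a - 2) + 1)"
      using weighted_Gamma_product_le[OF \<rho> s a] by metis
    have "K \<ge> 1" unfolding K_def by (rule lattice_weight_infsum_ge_1)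
    then show "0 \<le> 2 * K * L0 * L2 ^ (a - 1)" using L by (intro mult_nonneg_nonneg) auto
  qed
  also have "\<dots> = (8 * K * (2 * real N) ^ (N + 2) * real D ^ D * exp (real D + 1) * exp \<rho> * L0 * L1 ^ (N + 2)) *
      (exp (1 + \<rho>) * (2 * real N) * L1) powr s * (exp \<rho> * L2) ^ (a - 1) *
      Gamma (\<rho> * s + (\<rho> - 1) * (real a - 2) + 1)"
    by (simp add: b_def power_mult_distrib mult_ac)
  finally show ?thesis using S by simp
qed

theorem lemma4p4:
  fixes \<rho> :: real
  assumes "\<rho> \<ge> 1"
  shows "\<exists>c c' c''. c > 0 \<and> c' > 0 \<and> c'' > 0 \<and>
    (\<forall>(L0::real) (L1::real) (L2::real) (b :: ('n::finite \<Rightarrow> nat) \<Rightarrow> real^'n \<Rightarrow> real).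
      L0 \<ge> 1 \<and> L1 \<ge> 1 \<and> L2 \<ge> 1 \<and>
      (\<forall>\<alpha>. mabs \<alpha> \<ge> 2 \<longrightarrow> smooth_fun (b \<alpha>) \<and> periodic_torus (b \<alpha>)) \<and>
      (\<forall>\<alpha> \<beta> \<theta>. mabs \<alpha> \<ge> 2 \<longrightarrow>
          \<bar>pdiff \<beta> (b \<alpha>) \<theta>\<bar> \<le> L0 * L1 ^ mabs \<beta> * L2 ^ (mabs \<alpha> - 1) *
             Gamma (\<rho> * real (mabs \<beta>) + 1) * Gamma ((\<rho> - 1) * real (mabs \<alpha>) + 1))
      \<longrightarrow>
      (\<forall>s \<alpha>. s \<ge> 0 \<and> mabs \<alpha> \<ge> 2 \<longrightarrow>
          S_summable s (b \<alpha>) \<and>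
          P_norm s (b \<alpha>) \<le> (c * L0 * L1 ^ (CARD('n) + 2)) * (c' * L1) powr s *
             (c'' * L2) ^ (mabs \<alpha> - 1) *
             Gamma (\<rho> * s + (\<rho> - 1) * (real (mabs \<alpha>) - 2) + 1)))"
proof -
  define N where "N = CARD('n)"
  define D where "D = nat \<lceil>\<rho> * (real CARD('n) + 4)\<rceil>"
  define K where "K = (\<Sum>\<^sub>\<infinity>k::'n \<Rightarrow> int. lattice_weight k)"
  define c where "c = 8 * K * (2 * real N) ^ (N + 2) * real D ^ D * exp (real D + 1) * exp \<rho>"
  define c' where "c' = exp (1 + \<rho>) * (2 * real N)"
  have "N \<ge> 1" "K \<ge> 1"
    unfolding N_def K_def by (simp_all add: Suc_le_eq lattice_weight_infsum_ge_1)
  moreover have "D > 0" unfolding D_def using assms by (simp add: add_pos_nonneg)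
  ultimately have "c > 0" "c' > 0" unfolding c_def c'_def by simp_all
  show ?thesis
    by (rule exI[of _ c], rule exI[of _ c'], rule exI[of _ "exp \<rho>"],
        intro conjI[OF \<open>c > 0\<close>] conjI[OF \<open>c' > 0\<close>] conjI[OF exp_gt_zero] allI impI)
      (unfold c_def c'_def N_def K_def D_def, intro P_norm_bound[OF assms]; auto)
qed

end
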